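(* $SL_3(\mathfrak{o})$ is the union of the sets $$\Gamma_\infty(3)\,u\,d\,\varphi_1(y)\quad (y\in Y(\mathfrak{o}),\ d\in D(3),\ u\in U(3)),$$ $$\Gamma_\infty(3)\,u\,d\,\varphi_2(y_2)\varphi_1(y_1)\quad (y_1,y_2\in Y(\mathfrak{o}),\ y_2\neq I_2,\ d\in D(3),\ u\in U(3)),$$ $$\Gamma_\infty(3)\,u\,d\,\varphi_1(y_3)\varphi_2(y_2)\varphi_1(y_1)\quad (y_1,y_2,y_3\in Y(\mathfrak{o}),\ y_2,y_3\neq I_2,\ d\in D(3),\ u\in U(3)),$$ and this union is disjoint: the three families together form a decomposition of $SL_3(\mathfrak{o})$ into pairwise disjoint sets.
   Context: Let $\omega=e^{2\pi i/3}$, $\mathfrak{o}=\mathbb{Z}[\omega]$, $\mathfrak{o}^\times$ its unit group. Fix representatives of nonzero elements modulo units ("$c\in(\mathfrak{o}-\{0\})/\mathfrak{o}^\times$") and, for each nonzero $c$, representatives of $\mathfrak{o}/c\mathfrak{o}$ ("$a\in\mathfrak{o}/c\mathfrak{o}$"). $Y(\mathfrak{o})=\{\begin{pmatrix}a&b\\c&d\end{pmatrix}\in SL_2(\mathfrak{o}) : c\in(\mathfrak{o}-\{0\})/\mathfrak{o}^\times,\ a\in\mathfrak{o}/c\mathfrak{o}\}\cup\{I_2\}$. $\Gamma(3)=\{A\in SL_3(\mathfrak{o}):A\equiv I_3\pmod{3\mathfrak{o}}\}$ (entrywise), $\Gamma_\infty(3)$ its subgroup of upper triangular unipotent matrices.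 $D(3)$: diagonal $\mathrm{diag}(i,j,k)$ with $i,j,k\in\mathfrak{o}$, $ijk=1$. $U(3)$: matrices $\begin{pmatrix}1&\alpha&\beta\\&1&\gamma\\&&1\end{pmatrix}$ with $\alpha,\beta,\gamma\in\{0,1,2\}+\{0,1,2\}\omega$. For $y=\begin{pmatrix}a&b\\c&d\end{pmatrix}\in SL_2(\mathfrak{o})$, $\varphi_1(y)=\begin{pmatrix}a&b&0\\c&d&0\\0&0&1\end{pmatrix}$, $\varphi_2(y)=\begin{pmatrix}1&0&0\\0&a&b\\0&c&d\end{pmatrix}$. *)

theory Defs
  imports "HOL-Analysis.Analysis"
begin

definition omega :: complex where
  "omega = cis (2 * pi / 3)"

definition Eis :: "complex set" where
  "Eis = {of_int a + of_int b * omega | a b :: int. True}"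

definition Eis_units :: "complex set" where
  "Eis_units = {u \<in> Eis. \<exists>v \<in> Eis. u * v = 1}"

definition nonzero_rep_system :: "complex set \<Rightarrow> bool" where
  "nonzero_rep_system C \<longleftrightarrow> C \<subseteq> Eis - {0} \<and>
     (\<forall>x \<in> Eis - {0}. \<exists>!c. c \<in> C \<and> (\<exists>u \<in> Eis_units. x = u * c))"

definition residue_rep_system :: "complex \<Rightarrow> complex set \<Rightarrow> bool" where
  "residue_rep_system c A \<longleftrightarrow> A \<subseteq> Eis \<and>
     (\<forall>x \<in> Eis. \<exists>!a. a \<in> A \<and> (\<exists>t \<in> Eis. x - a = c * t))"

definition SL2 :: "(complex^2^2) set" where
  "SL2 = {M. (\<forall>i j. M $ i $ j \<in> Eis) \<and> det M = 1}"

definition SL3 :: "(complex^3^3) set" where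
  "SL3 = {M. (\<forall>i j. M $ i $ j \<in> Eis) \<and> det M = 1}"

definition mat2 :: "complex \<Rightarrow> complex \<Rightarrow> complex \<Rightarrow> complex \<Rightarrow> complex^2^2" where
  "mat2 a b c d = (\<chi> i j. if i = 1 then (if j = 1 then a else b)
                           else (if j = 1 then c else d))"

definition mat3 :: "complex \<Rightarrow> complex \<Rightarrow> complex \<Rightarrow> complex \<Rightarrow> complex \<Rightarrow> complex
     \<Rightarrow> complex \<Rightarrow> complex \<Rightarrow> complex \<Rightarrow> complex^3^3" where
  "mat3 a11 a12 a13 a21 a22 a23 a31 a32 a33 =
     (\<chi> i j. if i = 1 then (if j = 1 then a11 else if j = 2 then a12 else a13)
             else if i = 2 then (if j = 1 then a21 else if j = 2 then a22 else a23)
             else (if j = 1 then a31 else if j = 2 then a32 else a33))"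

definition Yset :: "complex set \<Rightarrow> (complex \<Rightarrow> complex set) \<Rightarrow> (complex^2^2) set" where
  "Yset C R = {y \<in> SL2. y $ 2 $ 1 \<in> C \<and> y $ 1 $ 1 \<in> R (y $ 2 $ 1)} \<union> {mat 1}"

definition Gamma3 :: "(complex^3^3) set" where
  "Gamma3 = {A \<in> SL3. \<forall>i j. \<exists>t \<in> Eis. A $ i $ j - (mat 1 :: complex^3^3) $ i $ j = 3 * t}"

definition Gamma_inf3 :: "(complex^3^3) set" where
  "Gamma_inf3 = {A \<in> Gamma3. A $ 1 $ 1 = 1 \<and> A $ 2 $ 2 = 1 \<and> A $ 3 $ 3 = 1 \<and>
                   A $ 2 $ 1 = 0 \<and> A $ 3 $ 1 = 0 \<and> A $ 3 $ 2 = 0}"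

definition D3 :: "(complex^3^3) set" where
  "D3 = {mat3 i 0 0 0 j 0 0 0 k | i j k. i \<in> Eis \<and> j \<in> Eis \<and> k \<in> Eis \<and> i * j * k = 1}"

definition small_res :: "complex set" where
  "small_res = {of_int a + of_int b * omega | a b :: int. a \<in> {0,1,2} \<and> b \<in> {0,1,2}}"

definition U3 :: "(complex^3^3) set" where
  "U3 = {mat3 1 \<alpha> \<beta> 0 1 \<gamma> 0 0 1 | \<alpha> \<beta> \<gamma>. \<alpha> \<in> small_res \<and> \<beta> \<in> small_res \<and> \<gamma> \<in> small_res}"

definition phi1 :: "complex^2^2 \<Rightarrow> complex^3^3" where
  "phi1 y = mat3 (y$1$1) (y$1$2) 0 (y$2$1) (y$2$2) 0 0 0 1"

definition phi2 :: "complex^2^2 \<Rightarrow> complex^3^3" where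
  "phi2 y = mat3 1 0 0 0 (y$1$1) (y$1$2) 0 (y$2$1) (y$2$2)"

datatype cell_index =
    Cell1 "complex^2^2" "complex^3^3" "complex^3^3"
  | Cell2 "complex^2^2" "complex^2^2" "complex^3^3" "complex^3^3"
  | Cell3 "complex^2^2" "complex^2^2" "complex^2^2" "complex^3^3" "complex^3^3"

fun valid_index :: "complex set \<Rightarrow> (complex \<Rightarrow> complex set) \<Rightarrow> cell_index \<Rightarrow> bool" where
  "valid_index C R (Cell1 y d u) \<longleftrightarrow> y \<in> Yset C R \<and> d \<in> D3 \<and> u \<in> U3"
| "valid_index C R (Cell2 y1 y2 d u) \<longleftrightarrow> y1 \<in> Yset C R \<and> y2 \<in> Yset C R \<and> y2 \<noteq> mat 1
      \<and> d \<in> D3 \<and> u \<in> U3"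
| "valid_index C R (Cell3 y1 y2 y3 d u) \<longleftrightarrow> y1 \<in> Yset C R \<and> y2 \<in> Yset C R \<and> y3 \<in> Yset C R
      \<and> y2 \<noteq> mat 1 \<and> y3 \<noteq> mat 1 \<and> d \<in> D3 \<and> u \<in> U3"

fun cell :: "cell_index \<Rightarrow> (complex^3^3) set" where
  "cell (Cell1 y d u) = (\<lambda>g. g ** u ** d ** phi1 y) ` Gamma_inf3"
| "cell (Cell2 y1 y2 d u) = (\<lambda>g. g ** u ** d ** phi2 y2 ** phi1 y1) ` Gamma_inf3"
| "cell (Cell3 y1 y2 y3 d u) = (\<lambda>g. g ** u ** d ** phi1 y3 ** phi2 y2 ** phi1 y1) ` Gamma_inf3"

end

theory Submission
  imports Defs
begin

(* Since Z[omega] is Euclidean, every pair (r, w) with r \<noteq> 0 is a multiple l (c, d) of the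
   bottom row (c, d) of some y in Y, and the representative systems C and R make y unique:
   elements of Y with proportional bottom rows are equal. Multiplying M in SL3 on the right
   by the inverses of phi1(y) and phi2(y) for such y clears the bottom row of M from the
   left and then its (2,1) entry, so M = B phi1(y3) phi2(y2) phi1(y1) with B upper
   triangular; reducing the off-diagonal entries of B modulo 3 writes B = g u d with
   g in Gamma_inf(3), u in U(3) and d in D(3).
   Conversely, the bottom row of B phi1(y3) phi2(y2) phi1(y1) is B33 (c2 c1, c2 d1, d2),
   which determines y1 and y2; after cancelling them, the second row of B phi1(y3)
   determines y3, and finally the diagonal of B and the residues modulo 3 of its entries
   determine d and u. *)

section \<open>Eisenstein integers\<close>

lemma omega_re: "Re omega = -1/2" and omega_im: "Im omega = sqrt 3 / 2"
  by (simp_all add: omega_def cos_120 sin_120)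

lemma omega_mult_omega: "omega * omega = -1 - omega"
  by (simp add: complex_eq_iff omega_re omega_im)

lemma Eis_iff: "z \<in> Eis \<longleftrightarrow> (\<exists>a b::int. z = of_int a + of_int b * omega)"
  by (auto simp: Eis_def)

lemma Eis_of_int [simp]: "of_int n \<in> Eis"
  unfolding Eis_iff by (rule exI[of _ n], rule exI[of _ 0]) simp

lemma Eis_0 [simp]: "0 \<in> Eis" and Eis_1 [simp]: "1 \<in> Eis" and Eis_numeral [simp]: "numeral k \<in> Eis"
  using Eis_of_int[of 0] Eis_of_int[of 1] Eis_of_int[of "numeral k"] by simp_all

lemma Eis_add [simp]: "x \<in> Eis \<Longrightarrow> y \<in> Eis \<Longrightarrow> x + y \<in> Eis"
proof -
  assume "x \<in> Eis" "y \<in> Eis"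
  then obtain a b c d where "x = of_int a + of_int b * omega" "y = of_int c + of_int d * omega"
    unfolding Eis_iff by blast
  then have "x + y = of_int (a + c) + of_int (b + d) * omega"
    by (simp add: algebra_simps)
  then show ?thesis
    unfolding Eis_iff by blast
qed

lemma Eis_uminus [simp]: "x \<in> Eis \<Longrightarrow> - x \<in> Eis"
proof -
  assume "x \<in> Eis"
  then obtain a b where "x = of_int a + of_int b * omega"
    unfolding Eis_iff by blast
  then have "- x = of_int (- a) + of_int (- b) * omega"
    by simp
  then show ?thesis
    unfolding Eis_iff by blast
qed

lemma Eis_diff [simp]: "x \<in> Eis \<Longrightarrow> y \<in> Eis \<Longrightarrow> x - y \<in> Eis"
  using Eis_add[of x "- y"] by simp

lemma Eis_mult [simp]: "x \<in> Eis \<Longrightarrow> y \<in> Eis \<Longrightarrow> x * y \<in> Eis"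
proof -
  assume "x \<in> Eis" "y \<in> Eis"
  then obtain a b c d where xy: "x = of_int a + of_int b * omega" "y = of_int c + of_int d * omega"
    unfolding Eis_iff by blast
  have "x * y = of_int a * of_int c + (of_int a * of_int d + of_int b * of_int c) * omega
      + of_int b * of_int d * (omega * omega)"
    unfolding xy by (simp add: algebra_simps)
  also have "\<dots> = of_int (a*c - b*d) + of_int (a*d + b*c - b*d) * omega"
    unfolding omega_mult_omega by (simp add: algebra_simps)
  finally show ?thesis
    unfolding Eis_iff by blast
qed

lemma Eis_sum: "(\<And>i. i \<in> S \<Longrightarrow> f i \<in> Eis) \<Longrightarrow> sum f S \<in> Eis"
  by (induction S rule: infinite_finite_induct) auto

lemma Eis_basis_unique:
  assumes "of_int a + of_int b * omega = (0::complex)"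
  shows "a = 0 \<and> b = 0"
proof -
  have "b = 0"
    using arg_cong[OF assms, of Im] by (simp add: omega_im)
  with assms show ?thesis
    by simp
qed

lemma Eis_unitsI: "k \<in> Eis \<Longrightarrow> k' \<in> Eis \<Longrightarrow> k * k' = 1 \<Longrightarrow> k \<in> Eis_units"
  unfolding Eis_units_def by blast

lemma norm_square_Eis: "(cmod (of_int a + of_int b * omega))^2 = of_int (a^2 - a*b + b^2)"
proof -
  have "(cmod (of_int a + of_int b * omega))^2 = (a - b/2)^2 + (b * sqrt 3 / 2)^2"
    by (simp add: cmod_def omega_re omega_im)
  also have "\<dots> = a^2 - a*b + b^2"
    by (simp add: power2_eq_square algebra_simps)
  finally show ?thesis
    by simp
qed

lemma norm_square_Eis_int: "x \<in> Eis \<Longrightarrow> \<exists>n::int. (cmod x)^2 = n"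
  unfolding Eis_iff using norm_square_Eis by blast

lemma Eis_norm_square_less:
  assumes "r \<in> Eis" "b \<in> Eis" "cmod r < cmod b" "(cmod b)^2 < Suc n"
  shows "(cmod r)^2 < n"
proof -
  obtain i j :: int where "(cmod r)^2 = i" "(cmod b)^2 = j"
    using norm_square_Eis_int assms(1,2) by blast
  moreover have "(cmod r)^2 < (cmod b)^2"
    using assms(3) by (simp add: power_strict_mono)
  ultimately show ?thesis
    using assms(4) by simp
qed

text \<open>Rounding both coordinates of \<open>z / w\<close> in the basis \<open>1, omega\<close> leaves an error
  \<open>s + t omega\<close> with \<open>|s|, |t| \<le> 1/2\<close>, whose norm \<open>s\<^sup>2 - s t + t\<^sup>2\<close> is at most \<open>3/4\<close>.\<close>
lemma Eis_division:
  assumes "z \<in> Eis" "w \<in> Eis" "w \<noteq> 0"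
  shows "\<exists>q \<in> Eis. cmod (z - w * q) < cmod w"
proof -
  define q where "q = Im (z / w) / Im omega"
  define p where "p = Re (z / w) - q * Re omega"
  have pq: "z / w = of_real p + of_real q * omega"
    by (simp add: p_def q_def complex_eq_iff omega_im)
  define s where "s = p - round p"
  define t where "t = q - round q"
  have s: "\<bar>s\<bar> \<le> 1/2" and t: "\<bar>t\<bar> \<le> 1/2"
    unfolding s_def t_def using of_int_round_abs_le by (simp_all add: abs_minus_commute)
  define Q where "Q = of_int (round p) + of_int (round q) * omega"
  have "Q \<in> Eis"
    unfolding Q_def Eis_iff by blast
  have "z / w - Q = of_real s + of_real t * omega"
    unfolding pq Q_def s_def t_def by (simp add: algebra_simps)
  then have "(cmod (z / w - Q))^2 = (s - t/2)^2 + (t * sqrt 3 / 2)^2"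
    by (simp add: cmod_def omega_re omega_im)
  also have "\<dots> = s^2 - s*t + t^2"
    by (simp add: power2_eq_square algebra_simps)
  also have "\<dots> \<le> \<bar>s\<bar> * \<bar>s\<bar> + \<bar>s\<bar> * \<bar>t\<bar> + \<bar>t\<bar> * \<bar>t\<bar>"
    by (simp add: power2_eq_square abs_mult[symmetric])
  also have "\<dots> < 1"
    using mult_mono[OF s s] mult_mono[OF s t] mult_mono[OF t t] by simp
  finally have "cmod (z / w - Q) < 1"
    by (simp add: power_less_one_iff)
  moreover have "z - w * Q = w * (z / w - Q)"
    using assms(3) by (simp add: field_simps)
  ultimately have "cmod (z - w * Q) < cmod w"
    using assms(3) by (simp add: norm_mult)
  with \<open>Q \<in> Eis\<close> show ?thesis
    by blast
qed

lemma Eis_bezout: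
  assumes "a \<in> Eis" "b \<in> Eis"
  shows "\<exists>g s t x y. s \<in> Eis \<and> t \<in> Eis \<and> x \<in> Eis \<and> y \<in> Eis \<and>
           g = s * a + t * b \<and> a = g * x \<and> b = g * y"
proof -
  obtain n :: nat where "(cmod b)^2 < n"
    using reals_Archimedean2 by blast
  then show ?thesis
    using assms
  proof (induction n arbitrary: a b)
    case 0
    then show ?case
      by simp
  next
    case (Suc n)
    show ?case
    proof (cases "b = 0")
      case True
      then show ?thesis
        using Suc.prems by (intro exI[of _ a] exI[of _ 1] exI[of _ 0]) auto
    next
      case False
      then obtain q where q: "q \<in> Eis" "cmod (a - b * q) < cmod b"
        using Eis_division Suc.prems by blast
      define r where "r = a - b * q"
      have "r \<in> Eis"
        unfolding r_def using Suc.prems q by simp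
      have "(cmod r)^2 < n"
        using Eis_norm_square_less \<open>r \<in> Eis\<close> Suc.prems q(2) unfolding r_def by blast
      then obtain g s t x y where IH: "s \<in> Eis" "t \<in> Eis" "x \<in> Eis" "y \<in> Eis"
          "g = s * b + t * r" "b = g * x" "r = g * y"
        using Suc.IH Suc.prems \<open>r \<in> Eis\<close> by blast
      have "g = t * a + (s - t * q) * b" "a = g * (x * q + y)"
        using IH(5-7) unfolding r_def by algebra+
      moreover have "s - t * q \<in> Eis" "x * q + y \<in> Eis"
        using IH(1-4) q(1) by simp_all
      ultimately show ?thesis
        using IH(1-4,6) by blast
    qed
  qed
qed

section \<open>Two- and three-dimensional matrices\<close>

lemma mat2_nth [simp]:
  "mat2 a b c d $ 1 $ 1 = a" "mat2 a b c d $ 1 $ 2 = b"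
  "mat2 a b c d $ 2 $ 1 = c" "mat2 a b c d $ 2 $ 2 = d"
  by (simp_all add: mat2_def)

lemma mat3_nth [simp]:
  "mat3 a11 a12 a13 a21 a22 a23 a31 a32 a33 $ 1 $ 1 = a11"
  "mat3 a11 a12 a13 a21 a22 a23 a31 a32 a33 $ 1 $ 2 = a12"
  "mat3 a11 a12 a13 a21 a22 a23 a31 a32 a33 $ 1 $ 3 = a13"
  "mat3 a11 a12 a13 a21 a22 a23 a31 a32 a33 $ 2 $ 1 = a21"
  "mat3 a11 a12 a13 a21 a22 a23 a31 a32 a33 $ 2 $ 2 = a22"
  "mat3 a11 a12 a13 a21 a22 a23 a31 a32 a33 $ 2 $ 3 = a23"
  "mat3 a11 a12 a13 a21 a22 a23 a31 a32 a33 $ 3 $ 1 = a31"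
  "mat3 a11 a12 a13 a21 a22 a23 a31 a32 a33 $ 3 $ 2 = a32"
  "mat3 a11 a12 a13 a21 a22 a23 a31 a32 a33 $ 3 $ 3 = a33"
  by (simp_all add: mat3_def)

lemma mat2_eta: "M = mat2 (M$1$1) (M$1$2) (M$2$1) (M$2$2)"
  unfolding vec_eq_iff forall_2 by simp

lemma mat3_eta: "M = mat3 (M$1$1) (M$1$2) (M$1$3) (M$2$1) (M$2$2) (M$2$3) (M$3$1) (M$3$2) (M$3$3)"
  unfolding vec_eq_iff forall_3 by simp

lemma mat2_eq_iff: "mat2 a b c d = mat2 a' b' c' d' \<longleftrightarrow> a = a' \<and> b = b' \<and> c = c' \<and> d = d'"
  by (metis mat2_nth)

lemma mat3_eq_iff:
  "mat3 a11 a12 a13 a21 a22 a23 a31 a32 a33 = mat3 b11 b12 b13 b21 b22 b23 b31 b32 b33 \<longleftrightarrow>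
   a11 = b11 \<and> a12 = b12 \<and> a13 = b13 \<and> a21 = b21 \<and> a22 = b22 \<and> a23 = b23 \<and>
   a31 = b31 \<and> a32 = b32 \<and> a33 = b33"
  by (metis mat3_nth)

lemma mat2_mult:
  "mat2 a b c d ** mat2 a' b' c' d' = mat2 (a*a' + b*c') (a*b' + b*d') (c*a' + d*c') (c*b' + d*d')"
  unfolding vec_eq_iff forall_2 by (simp add: matrix_matrix_mult_def sum_2)

lemma mat3_mult:
  "mat3 a11 a12 a13 a21 a22 a23 a31 a32 a33 ** mat3 b11 b12 b13 b21 b22 b23 b31 b32 b33 =
   mat3 (a11*b11 + a12*b21 + a13*b31) (a11*b12 + a12*b22 + a13*b32) (a11*b13 + a12*b23 + a13*b33)
        (a21*b11 + a22*b21 + a23*b31) (a21*b12 + a22*b22 + a23*b32) (a21*b13 + a22*b23 + a23*b33)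
        (a31*b11 + a32*b21 + a33*b31) (a31*b12 + a32*b22 + a33*b32) (a31*b13 + a32*b23 + a33*b33)"
  unfolding vec_eq_iff forall_3 by (simp add: matrix_matrix_mult_def sum_3)

lemma mat1_eq_mat2: "(mat 1 :: complex^2^2) = mat2 1 0 0 1"
  unfolding vec_eq_iff forall_2 by (simp add: mat_def)

lemma mat1_eq_mat3: "(mat 1 :: complex^3^3) = mat3 1 0 0 0 1 0 0 0 1"
  unfolding vec_eq_iff forall_3 by (simp add: mat_def)

lemma SL2_mat2_iff:
  "mat2 a b c d \<in> SL2 \<longleftrightarrow> a \<in> Eis \<and> b \<in> Eis \<and> c \<in> Eis \<and> d \<in> Eis \<and> a*d - b*c = 1"
  unfolding SL2_def by (simp add: forall_2 det_2)

lemma SL3_mat3_iff: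
  "mat3 a11 a12 a13 a21 a22 a23 a31 a32 a33 \<in> SL3 \<longleftrightarrow>
   a11 \<in> Eis \<and> a12 \<in> Eis \<and> a13 \<in> Eis \<and> a21 \<in> Eis \<and> a22 \<in> Eis \<and> a23 \<in> Eis \<and>
   a31 \<in> Eis \<and> a32 \<in> Eis \<and> a33 \<in> Eis \<and>
   a11*a22*a33 + a12*a23*a31 + a13*a21*a32 - a11*a23*a32 - a12*a21*a33 - a13*a22*a31 = 1"
  unfolding SL3_def by (simp add: forall_3 det_3)

lemma SL2_nth: "y \<in> SL2 \<Longrightarrow> y $ i $ j \<in> Eis"
  unfolding SL2_def by blast

lemma SL3_nth: "M \<in> SL3 \<Longrightarrow> M $ i $ j \<in> Eis"
  unfolding SL3_def by blast

lemma SL2_det: "y \<in> SL2 \<Longrightarrow> y$1$1 * y$2$2 - y$1$2 * y$2$1 = 1"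
  unfolding SL2_def by (simp add: det_2)

lemma SL2_bottom_row_nonzero: "y \<in> SL2 \<Longrightarrow> y$2$1 \<noteq> 0 \<or> y$2$2 \<noteq> 0"
  using SL2_det by fastforce

lemma SL3_mult: "A \<in> SL3 \<Longrightarrow> B \<in> SL3 \<Longrightarrow> A ** B \<in> SL3"
  unfolding SL3_def by (simp add: det_mul) (simp add: matrix_matrix_mult_def Eis_sum)

lemma phi1_mat2: "phi1 (mat2 a b c d) = mat3 a b 0 c d 0 0 0 1"
  by (simp add: phi1_def)

lemma phi2_mat2: "phi2 (mat2 a b c d) = mat3 1 0 0 0 a b 0 c d"
  by (simp add: phi2_def)

lemma phi1_nth:
  "phi1 y $ 2 $ 1 = y $ 2 $ 1" "phi1 y $ 2 $ 2 = y $ 2 $ 2"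
  "phi1 y $ 3 $ 1 = 0" "phi1 y $ 3 $ 2 = 0" "phi1 y $ 3 $ 3 = 1"
  by (simp_all add: phi1_def)

lemma phi1_mult: "phi1 (x ** y) = phi1 x ** phi1 y"
  unfolding vec_eq_iff forall_3 by (simp add: phi1_def matrix_matrix_mult_def sum_2 sum_3)

lemma phi2_mult: "phi2 (x ** y) = phi2 x ** phi2 y"
  unfolding vec_eq_iff forall_3 by (simp add: phi2_def matrix_matrix_mult_def sum_2 sum_3)

lemma phi1_mat1 [simp]: "phi1 (mat 1) = mat 1" and phi2_mat1 [simp]: "phi2 (mat 1) = mat 1"
  by (simp_all add: mat1_eq_mat2 mat1_eq_mat3 phi1_mat2 phi2_mat2)

lemma phi1_SL3: "y \<in> SL2 \<Longrightarrow> phi1 y \<in> SL3"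
  by (subst (asm) mat2_eta, subst mat2_eta) (simp add: SL2_mat2_iff phi1_mat2 SL3_mat3_iff del: mat2_nth)

lemma phi2_SL3: "y \<in> SL2 \<Longrightarrow> phi2 y \<in> SL3"
  by (subst (asm) mat2_eta, subst mat2_eta) (simp add: SL2_mat2_iff phi2_mat2 SL3_mat3_iff del: mat2_nth)

definition inv2 :: "complex^2^2 \<Rightarrow> complex^2^2" where
  "inv2 y = mat2 (y$2$2) (- y$1$2) (- y$2$1) (y$1$1)"

lemma inv2_SL2: "y \<in> SL2 \<Longrightarrow> inv2 y \<in> SL2"
  unfolding inv2_def by (simp add: SL2_mat2_iff SL2_nth SL2_det mult.commute)

lemma SL2_mult_inv2: "y \<in> SL2 \<Longrightarrow> y ** inv2 y = mat 1"
  unfolding inv2_def by (subst (1) mat2_eta) (simp add: mat2_mult mat1_eq_mat2 SL2_det algebra_simps)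

lemma SL2_inv2_mult: "y \<in> SL2 \<Longrightarrow> inv2 y ** y = mat 1"
  unfolding inv2_def by (subst (3) mat2_eta) (simp add: mat2_mult mat1_eq_mat2 SL2_det algebra_simps)

lemma phi1_cancel_right:
  assumes "y \<in> SL2"
  shows "X ** phi1 y = X' ** phi1 y \<longleftrightarrow> X = X'"
  by (metis SL2_mult_inv2[OF assms] matrix_mul_assoc matrix_mul_rid phi1_mult phi1_mat1)

lemma phi2_cancel_right:
  assumes "y \<in> SL2"
  shows "X ** phi2 y = X' ** phi2 y \<longleftrightarrow> X = X'"
  by (metis SL2_mult_inv2[OF assms] matrix_mul_assoc matrix_mul_rid phi2_mult phi2_mat1)

lemma mult_phi1_inv2_phi1: "y \<in> SL2 \<Longrightarrow> M ** phi1 (inv2 y) ** phi1 y = M"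
  by (metis SL2_inv2_mult matrix_mul_assoc matrix_mul_rid phi1_mult phi1_mat1)

lemma mult_phi2_inv2_phi2: "y \<in> SL2 \<Longrightarrow> M ** phi2 (inv2 y) ** phi2 y = M"
  by (metis SL2_inv2_mult matrix_mul_assoc matrix_mul_rid phi2_mult phi2_mat1)

lemma matrix_mult_phi1_nth:
  "(X ** phi1 y) $ i $ 1 = X$i$1 * y$1$1 + X$i$2 * y$2$1"
  "(X ** phi1 y) $ i $ 2 = X$i$1 * y$1$2 + X$i$2 * y$2$2"
  "(X ** phi1 y) $ i $ 3 = X$i$3"
  by (simp_all add: matrix_matrix_mult_def sum_3 phi1_def)

lemma matrix_mult_phi2_nth:
  "(X ** phi2 y) $ i $ 1 = X$i$1"
  "(X ** phi2 y) $ i $ 2 = X$i$2 * y$1$1 + X$i$3 * y$2$1"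
  "(X ** phi2 y) $ i $ 3 = X$i$2 * y$1$2 + X$i$3 * y$2$2"
  by (simp_all add: matrix_matrix_mult_def sum_3 phi2_def)

lemma mult_phi1_inv2_nth:
  assumes "y \<in> SL2" "M$i$1 = l * y$2$1" "M$i$2 = l * y$2$2"
  shows "(M ** phi1 (inv2 y))$i$1 = 0" "(M ** phi1 (inv2 y))$i$2 = l"
proof -
  show "(M ** phi1 (inv2 y))$i$1 = 0"
    using assms(2,3) by (simp add: matrix_mult_phi1_nth inv2_def)
  have "(M ** phi1 (inv2 y))$i$2 = l * (y$1$1 * y$2$2 - y$1$2 * y$2$1)"
    using assms(2,3) by (simp add: matrix_mult_phi1_nth inv2_def algebra_simps)
  then show "(M ** phi1 (inv2 y))$i$2 = l"
    using SL2_det[OF assms(1)] by simp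
qed

lemma mult_phi2_inv2_nth:
  assumes "y \<in> SL2" "M$i$2 = l * y$2$1" "M$i$3 = l * y$2$2"
  shows "(M ** phi2 (inv2 y))$i$2 = 0" "(M ** phi2 (inv2 y))$i$3 = l"
proof -
  show "(M ** phi2 (inv2 y))$i$2 = 0"
    using assms(2,3) by (simp add: matrix_mult_phi2_nth inv2_def)
  have "(M ** phi2 (inv2 y))$i$3 = l * (y$1$1 * y$2$2 - y$1$2 * y$2$1)"
    using assms(2,3) by (simp add: matrix_mult_phi2_nth inv2_def algebra_simps)
  then show "(M ** phi2 (inv2 y))$i$3 = l"
    using SL2_det[OF assms(1)] by simp
qed

lemma SL2_bottom_row_factorization:
  assumes "r \<in> Eis" "w \<in> Eis" "r \<noteq> 0"
  shows "\<exists>l y. y \<in> SL2 \<and> r = l * y$2$1 \<and> w = l * y$2$2"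
proof -
  obtain g s t x z where bez: "s \<in> Eis" "t \<in> Eis" "x \<in> Eis" "z \<in> Eis"
      "g = s * r + t * w" "r = g * x" "w = g * z"
    using Eis_bezout[OF assms(1,2)] by blast
  have "g * (s * x + t * z) = g * 1"
    using bez(5-7) by (simp add: algebra_simps)
  moreover have "g \<noteq> 0"
    using bez(6) assms(3) by auto
  ultimately have "t * z - (- s) * x = 1"
    by (simp add: add.commute)
  then have "mat2 t (- s) x z \<in> SL2"
    using bez(1-4) by (simp add: SL2_mat2_iff)
  then show ?thesis
    using bez(6,7) by fastforce
qed

lemma SL2_proportional_bottom_rows:
  assumes "y \<in> SL2" "y' \<in> SL2" "l \<noteq> 0"
    and c: "l * y$2$1 = l' * y'$2$1" and d: "l * y$2$2 = l' * y'$2$2"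
  shows "\<exists>k \<in> Eis_units. y'$2$1 = k * y$2$1 \<and> y'$2$2 = k * y$2$2"
proof -
  define k where "k = y$1$1 * y'$2$2 - y$1$2 * y'$2$1"
  define k' where "k' = y'$1$1 * y$2$2 - y'$1$2 * y$2$1"
  have l: "l = l' * k"
    using SL2_det[OF assms(1)] c d unfolding k_def by algebra
  have "l' = l * k'"
    using SL2_det[OF assms(2)] c d unfolding k'_def by algebra
  with l assms(3) have "k * k' = 1"
    by (metis mult.assoc mult_cancel_left1)
  moreover have "k \<in> Eis" "k' \<in> Eis"
    unfolding k_def k'_def using assms(1,2) SL2_nth by simp_all
  ultimately have "k \<in> Eis_units"
    by (rule Eis_unitsI[rotated 2])
  moreover have "l' \<noteq> 0"
    using l assms(3) by auto
  with c d have "y'$2$1 = k * y$2$1" "y'$2$2 = k * y$2$2"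
    unfolding l by (simp_all add: ac_simps)
  ultimately show ?thesis
    by blast
qed

lemma SL2_same_bottom_row:
  assumes "y \<in> SL2" "y' \<in> SL2" "y'$2$1 = y$2$1" "y'$2$2 = y$2$2"
  shows "y$1$1 - y'$1$1 = y$2$1 * (y'$1$1 * y$1$2 - y$1$1 * y'$1$2)"
    and "y$1$1 = y'$1$1 \<Longrightarrow> y$2$1 \<noteq> 0 \<Longrightarrow> y = y'"
proof -
  show "y$1$1 - y'$1$1 = y$2$1 * (y'$1$1 * y$1$2 - y$1$1 * y'$1$2)"
    using SL2_det[OF assms(1)] SL2_det[OF assms(2)] assms(3,4) by algebra
  assume "y$1$1 = y'$1$1" "y$2$1 \<noteq> 0"
  moreover have "y$1$2 * y$2$1 = y'$1$2 * y$2$1"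
    using SL2_det[OF assms(1)] SL2_det[OF assms(2)] assms(3,4) \<open>y$1$1 = y'$1$1\<close> by algebra
  ultimately show "y = y'"
    using assms(3,4) by (subst (1 2) mat2_eta) simp
qed

section \<open>The set Y\<close>

lemma nonzero_rep_system_mem:
  "nonzero_rep_system C \<Longrightarrow> c \<in> C \<Longrightarrow> c \<in> Eis \<and> c \<noteq> 0"
  unfolding nonzero_rep_system_def by blast

lemma nonzero_rep_system_associated_eq:
  assumes "nonzero_rep_system C" "c \<in> C" "c' \<in> C" "k \<in> Eis_units" "c' = k * c"
  shows "c' = c"
proof -
  have "c' \<in> Eis - {0}"
    using nonzero_rep_system_mem[OF assms(1,3)] by blast
  then have "\<exists>!c0. c0 \<in> C \<and> (\<exists>u \<in> Eis_units. c' = u * c0)"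
    using assms(1) unfolding nonzero_rep_system_def by blast
  moreover have "\<exists>u \<in> Eis_units. c' = u * c'"
    using Eis_unitsI[of 1 1] by auto
  moreover have "\<exists>u \<in> Eis_units. c' = u * c"
    using assms(4,5) by blast
  ultimately show ?thesis
    using assms(2,3) by blast
qed

lemma residue_rep_system_cong_eq:
  assumes "residue_rep_system c A" "a \<in> A" "a' \<in> A" "t \<in> Eis" "a - a' = c * t"
  shows "a = a'"
proof -
  have "a \<in> Eis"
    using assms(1,2) unfolding residue_rep_system_def by blast
  then have "\<exists>!a0. a0 \<in> A \<and> (\<exists>t \<in> Eis. a - a0 = c * t)"
    using assms(1) unfolding residue_rep_system_def by blast
  moreover have "a - a = c * 0"
    by simp
  ultimately show ?thesis
    using assms(2-5) Eis_0 by blast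
qed

lemma mat1_in_Yset: "mat 1 \<in> Yset C R"
  unfolding Yset_def by simp

lemma Yset_SL2: "y \<in> Yset C R \<Longrightarrow> y \<in> SL2"
  unfolding Yset_def by (auto simp: mat1_eq_mat2 SL2_mat2_iff)

lemma Yset_nontrivial: "y \<in> Yset C R \<Longrightarrow> y \<noteq> mat 1 \<Longrightarrow> y$2$1 \<in> C \<and> y$1$1 \<in> R (y$2$1)"
  unfolding Yset_def by blast

lemma Yset_eq_mat1_iff:
  assumes "nonzero_rep_system C" "y \<in> Yset C R"
  shows "y = mat 1 \<longleftrightarrow> y$2$1 = 0"
  using Yset_nontrivial[OF assms(2)] nonzero_rep_system_mem[OF assms(1)]
  by (auto simp: mat1_eq_mat2)

lemma mat2_in_YsetI: "mat2 a b c d \<in> SL2 \<Longrightarrow> c \<in> C \<Longrightarrow> a \<in> R c \<Longrightarrow> mat2 a b c d \<in> Yset C R"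
  unfolding Yset_def by simp

lemma Yset_complete_bottom_row:
  assumes R: "\<forall>c \<in> C. residue_rep_system c (R c)"
    and "c \<in> C" "c \<in> Eis" "d \<in> Eis" "a0 \<in> Eis" "b0 \<in> Eis" "a0 * d - b0 * c = 1"
  shows "\<exists>a b. mat2 a b c d \<in> Yset C R"
proof -
  obtain a t where a: "a \<in> R c" "t \<in> Eis" "a0 - a = c * t"
    using R assms(2,5) unfolding residue_rep_system_def by blast
  have "a \<in> Eis"
    using R a(1) assms(2) unfolding residue_rep_system_def by blast
  have "a * d - (b0 - t * d) * c = a0 * d - b0 * c"
    using a(3) by algebra
  then have "mat2 a (b0 - t * d) c d \<in> SL2"
    using assms(3-7) a(2) \<open>a \<in> Eis\<close> by (simp add: SL2_mat2_iff)
  then show ?thesis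
    using mat2_in_YsetI assms(2) a(1) by blast
qed

text \<open>Normalise the bottom row into \<open>C\<close> by a unit, then adjust the top row by a multiple
  of the bottom row.\<close>
lemma Yset_bottom_row_factorization:
  assumes C: "nonzero_rep_system C" and R: "\<forall>c \<in> C. residue_rep_system c (R c)"
    and "r \<in> Eis" "w \<in> Eis" "r \<noteq> 0"
  shows "\<exists>l y. y \<in> Yset C R \<and> y \<noteq> mat 1 \<and> r = l * y$2$1 \<and> w = l * y$2$2"
proof -
  obtain l y where y: "y \<in> SL2" "r = l * y$2$1" "w = l * y$2$2"
    using SL2_bottom_row_factorization assms(3-5) by blast
  have "y$2$1 \<in> Eis - {0}"
    using y assms(5) SL2_nth by auto
  then obtain c k where c: "c \<in> C" "k \<in> Eis_units" "y$2$1 = k * c"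
    using C unfolding nonzero_rep_system_def by blast
  obtain k' where k': "k \<in> Eis" "k' \<in> Eis" "k * k' = 1"
    using c(2) unfolding Eis_units_def by blast
  have "c \<in> Eis" "c \<noteq> 0"
    using nonzero_rep_system_mem[OF C c(1)] by auto
  have "(k * y$1$1) * (k' * y$2$2) - (k * y$1$2) * c = 1"
    using SL2_det[OF y(1)] c(3) k'(3) by algebra
  then obtain a b where "mat2 a b c (k' * y$2$2) \<in> Yset C R"
    using Yset_complete_bottom_row[OF R c(1) \<open>c \<in> Eis\<close>] k' y(1) SL2_nth by (meson Eis_mult)
  moreover have "mat2 a b c (k' * y$2$2) \<noteq> mat 1"
    using \<open>c \<noteq> 0\<close> by (simp add: mat1_eq_mat2 mat2_eq_iff)
  moreover have "r = (l * k) * c" "w = (l * k) * (k' * y$2$2)"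
    using y(2,3) c(3) k'(3) by (simp_all add: ac_simps)
  ultimately show ?thesis
    by fastforce
qed

lemma Yset_eq_of_proportional_bottom_rows:
  assumes C: "nonzero_rep_system C" and R: "\<forall>c \<in> C. residue_rep_system c (R c)"
    and y: "y \<in> Yset C R" and y': "y' \<in> Yset C R" and "l \<noteq> 0" "l' \<noteq> 0"
    and c: "l * y$2$1 = l' * y'$2$1" and d: "l * y$2$2 = l' * y'$2$2"
  shows "y = y'"
proof (cases "y$2$1 = 0")
  case True
  then have "y'$2$1 = 0"
    using c \<open>l' \<noteq> 0\<close> by simp
  then show ?thesis
    using True Yset_eq_mat1_iff[OF C y] Yset_eq_mat1_iff[OF C y'] by simp
next
  case False
  then have "y \<noteq> mat 1" "y' \<noteq> mat 1"
    using c \<open>l \<noteq> 0\<close> Yset_eq_mat1_iff[OF C y] Yset_eq_mat1_iff[OF C y'] by auto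
  then have rep: "y$2$1 \<in> C" "y$1$1 \<in> R (y$2$1)" "y'$2$1 \<in> C" "y'$1$1 \<in> R (y'$2$1)"
    using Yset_nontrivial y y' by auto
  have SL: "y \<in> SL2" "y' \<in> SL2"
    using y y' by (simp_all add: Yset_SL2)
  obtain k where k: "k \<in> Eis_units" "y'$2$1 = k * y$2$1" "y'$2$2 = k * y$2$2"
    using SL2_proportional_bottom_rows[OF SL \<open>l \<noteq> 0\<close> c d] by blast
  have c_eq: "y'$2$1 = y$2$1"
    using nonzero_rep_system_associated_eq[OF C rep(1,3) k(1,2)] .
  with k(2) False have "k = 1"
    by simp
  with k(3) have d_eq: "y'$2$2 = y$2$2"
    by simp
  have "y'$1$1 * y$1$2 - y$1$1 * y'$1$2 \<in> Eis"
    using SL SL2_nth by simp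
  then have "y$1$1 = y'$1$1"
    using residue_rep_system_cong_eq R rep c_eq SL2_same_bottom_row(1)[OF SL c_eq d_eq] by metis
  then show ?thesis
    using SL2_same_bottom_row(2)[OF SL c_eq d_eq] False by blast
qed

section \<open>Upper triangular matrices\<close>

definition upper_SL3 :: "(complex^3^3) set" where
  "upper_SL3 = {M \<in> SL3. M$2$1 = 0 \<and> M$3$1 = 0 \<and> M$3$2 = 0}"

lemma mat3_in_upper_SL3_iff:
  "mat3 e1 x y 0 e2 z 0 0 e3 \<in> upper_SL3 \<longleftrightarrow>
     e1 \<in> Eis \<and> e2 \<in> Eis \<and> e3 \<in> Eis \<and> x \<in> Eis \<and> y \<in> Eis \<and> z \<in> Eis \<and> e1 * e2 * e3 = 1"
  unfolding upper_SL3_def by (auto simp: SL3_mat3_iff)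

lemma upper_SL3_eta:
  "M \<in> upper_SL3 \<Longrightarrow> M = mat3 (M$1$1) (M$1$2) (M$1$3) 0 (M$2$2) (M$2$3) 0 0 (M$3$3)"
  unfolding upper_SL3_def by (subst mat3_eta) simp

lemma upper_SL3_diag_nonzero:
  assumes "M \<in> upper_SL3"
  shows "M$2$2 \<noteq> 0" "M$3$3 \<noteq> 0"
  using assms upper_SL3_eta[OF assms] mat3_in_upper_SL3_iff by (metis mult_zero_left mult_zero_right zero_neq_one)+

lemma upper_SL3_mult_nth:
  assumes "M \<in> upper_SL3"
  shows "(M ** X)$2$j = M$2$2 * X$2$j + M$2$3 * X$3$j" "(M ** X)$3$j = M$3$3 * X$3$j"
  using assms unfolding upper_SL3_def by (simp_all add: matrix_matrix_mult_def sum_3)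

lemma Gamma_inf3_iff:
  "g \<in> Gamma_inf3 \<longleftrightarrow> (\<exists>p q r. p \<in> Eis \<and> q \<in> Eis \<and> r \<in> Eis \<and> g = mat3 1 (3*p) (3*q) 0 1 (3*r) 0 0 1)"
proof
  assume g: "g \<in> Gamma_inf3"
  then have G: "\<forall>i j. \<exists>t \<in> Eis. g $ i $ j - (mat 1 :: complex^3^3) $ i $ j = 3 * t"
    and diag: "g$1$1 = 1" "g$2$2 = 1" "g$3$3 = 1" "g$2$1 = 0" "g$3$1 = 0" "g$3$2 = 0"
    unfolding Gamma_inf3_def Gamma3_def by auto
  obtain p q r where "p \<in> Eis" "g$1$2 = 3 * p" "q \<in> Eis" "g$1$3 = 3 * q" "r \<in> Eis" "g$2$3 = 3 * r"
    using G[rule_format, of 1 2] G[rule_format, of 1 3] G[rule_format, of 2 3] by (auto simp: mat_def)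
  moreover have "g = mat3 1 (g$1$2) (g$1$3) 0 1 (g$2$3) 0 0 1"
    by (subst mat3_eta) (simp only: diag)
  ultimately show "\<exists>p q r. p \<in> Eis \<and> q \<in> Eis \<and> r \<in> Eis \<and> g = mat3 1 (3*p) (3*q) 0 1 (3*r) 0 0 1"
    by metis
next
  assume "\<exists>p q r. p \<in> Eis \<and> q \<in> Eis \<and> r \<in> Eis \<and> g = mat3 1 (3*p) (3*q) 0 1 (3*r) 0 0 1"
  then obtain p q r where pqr: "p \<in> Eis" "q \<in> Eis" "r \<in> Eis"
    and g: "g = mat3 1 (3*p) (3*q) 0 1 (3*r) 0 0 1"
    by blast
  have "g \<in> SL3"
    unfolding g SL3_mat3_iff using pqr by simp
  moreover have "\<forall>i j. \<exists>t \<in> Eis. g $ i $ j - (mat 1 :: complex^3^3) $ i $ j = 3 * t"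
    unfolding forall_3 g mat1_eq_mat3 using pqr by (auto intro: bexI[of _ 0])
  ultimately show "g \<in> Gamma_inf3"
    unfolding Gamma_inf3_def Gamma3_def g by simp
qed

lemma small_res_Eis: "r \<in> small_res \<Longrightarrow> r \<in> Eis"
  unfolding small_res_def Eis_def by blast

lemma small_res_exists: "w \<in> Eis \<Longrightarrow> \<exists>r t. r \<in> small_res \<and> t \<in> Eis \<and> w = r + 3 * t"
proof -
  assume "w \<in> Eis"
  then obtain a b where w: "w = of_int a + of_int b * omega"
    unfolding Eis_iff by blast
  define a0 b0 p q where "a0 = a mod 3" "b0 = b mod 3" "p = a div 3" "q = b div 3"
  have "a = a0 + 3 * p" "b = b0 + 3 * q"
    unfolding a0_b0_p_q_def by simp_all
  then have "w = (of_int a0 + of_int b0 * omega) + 3 * (of_int p + of_int q * omega)"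
    unfolding w by (simp add: algebra_simps)
  moreover have "of_int a0 + of_int b0 * omega \<in> small_res"
    unfolding small_res_def a0_b0_p_q_def by fastforce
  moreover have "of_int p + of_int q * omega \<in> Eis"
    unfolding Eis_iff by blast
  ultimately show ?thesis
    by blast
qed

lemma small_res_unique:
  assumes "r \<in> small_res" "r' \<in> small_res" "t \<in> Eis" "t' \<in> Eis" "r + 3 * t = r' + 3 * t'"
  shows "r = r'"
proof -
  obtain a b a' b' where ab: "r = of_int a + of_int b * omega" "a \<in> {0,1,2}" "b \<in> {0,1,2}"
    and ab': "r' = of_int a' + of_int b' * omega" "a' \<in> {0,1,2}" "b' \<in> {0,1,2}"
    using assms(1,2) unfolding small_res_def by blast
  obtain p q p' q' where t: "t = of_int p + of_int q * omega" "t' = of_int p' + of_int q' * omega"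
    using assms(3,4) unfolding Eis_iff by blast
  have "of_int (a - a' + 3 * (p - p')) + of_int (b - b' + 3 * (q - q')) * omega
      = r + 3 * t - (r' + 3 * t')"
    unfolding ab ab' t by (simp add: algebra_simps)
  also have "\<dots> = 0"
    using assms(5) by simp
  finally have "a - a' + 3 * (p - p') = 0 \<and> b - b' + 3 * (q - q') = 0"
    by (rule Eis_basis_unique)
  then have "a - a' = 3 * (p' - p)" "b - b' = 3 * (q' - q)"
    by (simp_all add: algebra_simps)
  moreover have "x - x' = 3 * k \<Longrightarrow> x \<in> {0,1,2} \<Longrightarrow> x' \<in> {0,1,2} \<Longrightarrow> x = x'"
    for x x' k :: int
    by auto presburger+
  ultimately have "a = a'" "b = b'"
    using ab(2,3) ab'(2,3) by blast+
  then show ?thesis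
    using ab ab' by simp
qed

lemma Gamma_U_D_mult:
  "mat3 1 (3*p) (3*q) 0 1 (3*r) 0 0 1 ** mat3 1 \<alpha> \<beta> 0 1 \<gamma> 0 0 1 ** mat3 i 0 0 0 j 0 0 0 k =
   mat3 i (j * (\<alpha> + 3*p)) (k * (\<beta> + 3 * (p*\<gamma> + q))) 0 j (k * (\<gamma> + 3*r)) 0 0 k"
  unfolding mat3_mult mat3_eq_iff by (simp add: algebra_simps)

lemma Gamma_U_D_in_upper_SL3:
  assumes "g \<in> Gamma_inf3" "u \<in> U3" "d \<in> D3"
  shows "g ** u ** d \<in> upper_SL3"
proof -
  obtain p q r where g: "p \<in> Eis" "q \<in> Eis" "r \<in> Eis" "g = mat3 1 (3*p) (3*q) 0 1 (3*r) 0 0 1"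
    using assms(1) Gamma_inf3_iff by blast
  obtain \<alpha> \<beta> \<gamma> where u: "\<alpha> \<in> Eis" "\<beta> \<in> Eis" "\<gamma> \<in> Eis" "u = mat3 1 \<alpha> \<beta> 0 1 \<gamma> 0 0 1"
    using assms(2) small_res_Eis unfolding U3_def by blast
  obtain i j k where d: "i \<in> Eis" "j \<in> Eis" "k \<in> Eis" "i * j * k = 1" "d = mat3 i 0 0 0 j 0 0 0 k"
    using assms(3) unfolding D3_def by blast
  show ?thesis
    unfolding g(4) u(4) d(5) Gamma_U_D_mult mat3_in_upper_SL3_iff using g u d by simp
qed

lemma upper_SL3_Gamma_U_D:
  assumes "B \<in> upper_SL3"
  shows "\<exists>g u d. g \<in> Gamma_inf3 \<and> u \<in> U3 \<and> d \<in> D3 \<and> B = g ** u ** d"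
proof -
  define e1 e2 e3 x y z where "e1 = B$1$1" "e2 = B$2$2" "e3 = B$3$3" "x = B$1$2" "y = B$1$3" "z = B$2$3"
  have B: "B = mat3 e1 x y 0 e2 z 0 0 e3"
    unfolding e1_e2_e3_x_y_z_def by (rule upper_SL3_eta[OF assms])
  have E: "e1 \<in> Eis" "e2 \<in> Eis" "e3 \<in> Eis" "x \<in> Eis" "y \<in> Eis" "z \<in> Eis" and det: "e1 * e2 * e3 = 1"
    using assms unfolding B mat3_in_upper_SL3_iff by simp_all
  obtain \<alpha> p where \<alpha>: "\<alpha> \<in> small_res" "p \<in> Eis" "x * e1 * e3 = \<alpha> + 3 * p"
    using small_res_exists[of "x * e1 * e3"] E by auto
  obtain \<gamma> r where \<gamma>: "\<gamma> \<in> small_res" "r \<in> Eis" "z * e1 * e2 = \<gamma> + 3 * r"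
    using small_res_exists[of "z * e1 * e2"] E by auto
  obtain \<beta> q where \<beta>: "\<beta> \<in> small_res" "q \<in> Eis" "y * e1 * e2 - 3 * p * \<gamma> = \<beta> + 3 * q"
    using small_res_exists[of "y * e1 * e2 - 3 * p * \<gamma>"] E \<alpha>(2) small_res_Eis[OF \<gamma>(1)] by auto
  have "x = e2 * (\<alpha> + 3 * p)" "y = e3 * (\<beta> + 3 * (p * \<gamma> + q))" "z = e3 * (\<gamma> + 3 * r)"
    using det \<alpha>(3) \<beta>(3) \<gamma>(3) by algebra+
  then have "B = mat3 1 (3*p) (3*q) 0 1 (3*r) 0 0 1 ** mat3 1 \<alpha> \<beta> 0 1 \<gamma> 0 0 1 ** mat3 e1 0 0 0 e2 0 0 0 e3"
    unfolding B Gamma_U_D_mult by simp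
  moreover have "mat3 1 (3*p) (3*q) 0 1 (3*r) 0 0 1 \<in> Gamma_inf3"
    unfolding Gamma_inf3_iff using \<alpha> \<beta> \<gamma> by blast
  moreover have "mat3 1 \<alpha> \<beta> 0 1 \<gamma> 0 0 1 \<in> U3"
    unfolding U3_def using \<alpha> \<beta> \<gamma> by blast
  moreover have "mat3 e1 0 0 0 e2 0 0 0 e3 \<in> D3"
    unfolding D3_def using E det by blast
  ultimately show ?thesis
    by blast
qed

lemma Gamma_U_D_unique:
  assumes "g \<in> Gamma_inf3" "u \<in> U3" "d \<in> D3" "g' \<in> Gamma_inf3" "u' \<in> U3" "d' \<in> D3"
    and eq: "g ** u ** d = g' ** u' ** d'"
  shows "u = u' \<and> d = d'"
proof -
  obtain p q r p' q' r' where
    g: "p \<in> Eis" "q \<in> Eis" "r \<in> Eis" "g = mat3 1 (3*p) (3*q) 0 1 (3*r) 0 0 1" and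
    g': "p' \<in> Eis" "q' \<in> Eis" "r' \<in> Eis" "g' = mat3 1 (3*p') (3*q') 0 1 (3*r') 0 0 1"
    using assms(1,4) Gamma_inf3_iff by meson
  obtain \<alpha> \<beta> \<gamma> \<alpha>' \<beta>' \<gamma>' where
    u: "\<alpha> \<in> small_res" "\<beta> \<in> small_res" "\<gamma> \<in> small_res" "u = mat3 1 \<alpha> \<beta> 0 1 \<gamma> 0 0 1" and
    u': "\<alpha>' \<in> small_res" "\<beta>' \<in> small_res" "\<gamma>' \<in> small_res" "u' = mat3 1 \<alpha>' \<beta>' 0 1 \<gamma>' 0 0 1"
    using assms(2,5) unfolding U3_def by blast
  obtain i j k i' j' k' where
    d: "i * j * k = 1" "d = mat3 i 0 0 0 j 0 0 0 k" and d': "d' = mat3 i' 0 0 0 j' 0 0 0 k'"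
    using assms(3,6) unfolding D3_def by blast
  have diag: "i = i'" "j = j'" "k = k'"
    and "j * (\<alpha> + 3*p) = j' * (\<alpha>' + 3*p')" "k * (\<gamma> + 3*r) = k' * (\<gamma>' + 3*r')"
      "k * (\<beta> + 3 * (p*\<gamma> + q)) = k' * (\<beta>' + 3 * (p'*\<gamma>' + q'))"
    using eq unfolding g(4) g'(4) u(4) u'(4) d(2) d' Gamma_U_D_mult mat3_eq_iff by blast+
  moreover have "j \<noteq> 0" "k \<noteq> 0"
    using d(1) by auto
  ultimately have "\<alpha> + 3*p = \<alpha>' + 3*p'" "\<gamma> + 3*r = \<gamma>' + 3*r'"
      "\<beta> + 3 * (p*\<gamma> + q) = \<beta>' + 3 * (p'*\<gamma>' + q')"
    by simp_all
  moreover have "p*\<gamma> + q \<in> Eis" "p'*\<gamma>' + q' \<in> Eis"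
    using g g' u(3) u'(3) small_res_Eis by simp_all
  ultimately have "\<alpha> = \<alpha>'" "\<gamma> = \<gamma>'" "\<beta> = \<beta>'"
    using small_res_unique u u' g g' by blast+
  then show ?thesis
    unfolding u(4) u'(4) d(2) d' using diag by simp
qed

section \<open>The cells\<close>

fun cell_params :: "cell_index \<Rightarrow>
    (complex^2^2) \<times> (complex^2^2) \<times> (complex^2^2) \<times> (complex^3^3) \<times> (complex^3^3)" where
  "cell_params (Cell1 y d u) = (y, mat 1, mat 1, d, u)"
| "cell_params (Cell2 y1 y2 d u) = (mat 1, y2, y1, d, u)"
| "cell_params (Cell3 y1 y2 y3 d u) = (y3, y2, y1, d, u)"

lemma cell_eq_image:
  "cell_params i = (y3, y2, y1, d, u) \<Longrightarrow>
   cell i = (\<lambda>g. g ** u ** d ** phi1 y3 ** phi2 y2 ** phi1 y1) ` Gamma_inf3"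
  by (cases i) auto

lemma valid_index_params:
  "valid_index C R i \<Longrightarrow> cell_params i = (y3, y2, y1, d, u) \<Longrightarrow>
   y3 \<in> Yset C R \<and> y2 \<in> Yset C R \<and> y1 \<in> Yset C R \<and> (y2 = mat 1 \<longrightarrow> y1 = mat 1) \<and>
   d \<in> D3 \<and> u \<in> U3"
  using mat1_in_Yset by (cases i) auto

lemma cell_params_inj:
  "valid_index C R i \<Longrightarrow> valid_index C R j \<Longrightarrow> cell_params i = cell_params j \<Longrightarrow> i = j"
  by (cases i; cases j) auto

lemma valid_index_with_params:
  assumes "y3 \<in> Yset C R" "y2 \<in> Yset C R" "y1 \<in> Yset C R" "y2 = mat 1 \<longrightarrow> y1 = mat 1"
    "d \<in> D3" "u \<in> U3"
  shows "\<exists>i. valid_index C R i \<and> cell_params i = (y3, y2, y1, d, u)"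
proof -
  consider "y2 = mat 1" | "y2 \<noteq> mat 1" "y3 = mat 1" | "y2 \<noteq> mat 1" "y3 \<noteq> mat 1"
    by blast
  then show ?thesis
  proof cases
    case 1
    then show ?thesis
      using assms by (intro exI[of _ "Cell1 y3 d u"]) simp
  next
    case 2
    then show ?thesis
      using assms by (intro exI[of _ "Cell2 y1 y2 d u"]) simp
  next
    case 3
    then show ?thesis
      using assms by (intro exI[of _ "Cell3 y1 y2 y3 d u"]) simp
  qed
qed

lemma cell_subset_SL3:
  assumes "valid_index C R i"
  shows "cell i \<subseteq> SL3"
proof
  fix M
  assume "M \<in> cell i"
  obtain y3 y2 y1 d u where params: "cell_params i = (y3, y2, y1, d, u)"
    by (metis prod_cases5)
  have y: "y3 \<in> SL2" "y2 \<in> SL2" "y1 \<in> SL2" and "d \<in> D3" "u \<in> U3"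
    using valid_index_params[OF assms params] Yset_SL2 by blast+
  obtain g where "g \<in> Gamma_inf3" and M: "M = g ** u ** d ** phi1 y3 ** phi2 y2 ** phi1 y1"
    using \<open>M \<in> cell i\<close> unfolding cell_eq_image[OF params] by blast
  then have "g ** u ** d \<in> SL3"
    using Gamma_U_D_in_upper_SL3 \<open>d \<in> D3\<close> \<open>u \<in> U3\<close> unfolding upper_SL3_def by blast
  then show "M \<in> SL3"
    unfolding M using y by (intro SL3_mult[OF SL3_mult[OF SL3_mult]] phi1_SL3 phi2_SL3)
qed

context
  fixes C :: "complex set" and R :: "complex \<Rightarrow> complex set"
  assumes C: "nonzero_rep_system C" and R: "\<forall>c \<in> C. residue_rep_system c (R c)"
begin

lemma SL3_eq_upper_phi1:
  assumes M: "M \<in> SL3" "M$3$1 = 0" "M$3$2 = 0"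
  shows "\<exists>B y. B \<in> upper_SL3 \<and> y \<in> Yset C R \<and> M = B ** phi1 y"
proof (cases "M$2$1 = 0")
  case True
  then have "M \<in> upper_SL3"
    using M unfolding upper_SL3_def by simp
  then show ?thesis
    using mat1_in_Yset by (metis matrix_mul_rid phi1_mat1)
next
  case False
  obtain l y where y: "y \<in> Yset C R" "M$2$1 = l * y$2$1" "M$2$2 = l * y$2$2"
    using Yset_bottom_row_factorization[OF C R SL3_nth SL3_nth False] M(1) by blast
  have SL: "y \<in> SL2"
    using y(1) by (rule Yset_SL2)
  define B where "B = M ** phi1 (inv2 y)"
  have "B \<in> SL3"
    unfolding B_def using M(1) by (intro SL3_mult phi1_SL3 inv2_SL2 SL)
  moreover have "B$2$1 = 0"
    unfolding B_def using mult_phi1_inv2_nth(1)[OF SL y(2,3)] .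
  moreover have "B$3$1 = 0" "B$3$2 = 0"
    unfolding B_def using M(2,3) by (simp_all add: matrix_mult_phi1_nth)
  ultimately have "B \<in> upper_SL3"
    unfolding upper_SL3_def by simp
  moreover have "M = B ** phi1 y"
    unfolding B_def mult_phi1_inv2_phi1[OF SL] ..
  ultimately show ?thesis
    using y(1) by blast
qed

lemma SL3_eq_upper_phi1_phi2:
  assumes M: "M \<in> SL3" "M$3$1 = 0" "M$3$2 \<noteq> 0"
  shows "\<exists>B y3 y2. B \<in> upper_SL3 \<and> y3 \<in> Yset C R \<and> y2 \<in> Yset C R \<and> y2 \<noteq> mat 1 \<and>
    M = B ** phi1 y3 ** phi2 y2"
proof -
  obtain l y2 where y2: "y2 \<in> Yset C R" "y2 \<noteq> mat 1" "M$3$2 = l * y2$2$1" "M$3$3 = l * y2$2$2"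
    using Yset_bottom_row_factorization[OF C R SL3_nth SL3_nth M(3)] M(1) by blast
  have SL: "y2 \<in> SL2"
    using y2(1) by (rule Yset_SL2)
  define M' where "M' = M ** phi2 (inv2 y2)"
  have "M' \<in> SL3"
    unfolding M'_def using M(1) by (intro SL3_mult phi2_SL3 inv2_SL2 SL)
  moreover have "M'$3$1 = 0"
    unfolding M'_def using M(2) by (simp add: matrix_mult_phi2_nth)
  moreover have "M'$3$2 = 0"
    unfolding M'_def using mult_phi2_inv2_nth(1)[OF SL y2(3,4)] .
  ultimately obtain B y3 where "B \<in> upper_SL3" "y3 \<in> Yset C R" "M' = B ** phi1 y3"
    using SL3_eq_upper_phi1 by blast
  moreover have "M = M' ** phi2 y2"
    unfolding M'_def mult_phi2_inv2_phi2[OF SL] ..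
  ultimately show ?thesis
    using y2(1,2) by blast
qed

lemma SL3_eq_upper_phi1_phi2_phi1:
  assumes M: "M \<in> SL3" "M$3$1 \<noteq> 0"
  shows "\<exists>B y3 y2 y1. B \<in> upper_SL3 \<and> y3 \<in> Yset C R \<and> y2 \<in> Yset C R \<and> y1 \<in> Yset C R \<and>
    y2 \<noteq> mat 1 \<and> M = B ** phi1 y3 ** phi2 y2 ** phi1 y1"
proof -
  obtain l y1 where y1: "y1 \<in> Yset C R" "M$3$1 = l * y1$2$1" "M$3$2 = l * y1$2$2"
    using Yset_bottom_row_factorization[OF C R SL3_nth SL3_nth M(2)] M(1) by blast
  have SL: "y1 \<in> SL2"
    using y1(1) by (rule Yset_SL2)
  define M' where "M' = M ** phi1 (inv2 y1)"
  have "M' \<in> SL3"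
    unfolding M'_def using M(1) by (intro SL3_mult phi1_SL3 inv2_SL2 SL)
  moreover have "M'$3$1 = 0" "M'$3$2 = l"
    unfolding M'_def using mult_phi1_inv2_nth[OF SL y1(2,3)] by simp_all
  moreover have "l \<noteq> 0"
    using y1(2) M(2) by auto
  ultimately obtain B y3 y2 where "B \<in> upper_SL3" "y3 \<in> Yset C R" "y2 \<in> Yset C R" "y2 \<noteq> mat 1"
      "M' = B ** phi1 y3 ** phi2 y2"
    using SL3_eq_upper_phi1_phi2 by metis
  moreover have "M = M' ** phi1 y1"
    unfolding M'_def mult_phi1_inv2_phi1[OF SL] ..
  ultimately show ?thesis
    using y1(1) by blast
qed

lemma SL3_bruhat_decomposition:
  assumes "M \<in> SL3"
  shows "\<exists>B y3 y2 y1. B \<in> upper_SL3 \<and> y3 \<in> Yset C R \<and> y2 \<in> Yset C R \<and> y1 \<in> Yset C R \<and>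
    (y2 = mat 1 \<longrightarrow> y1 = mat 1) \<and> M = B ** phi1 y3 ** phi2 y2 ** phi1 y1"
proof -
  consider "M$3$1 = 0" "M$3$2 = 0" | "M$3$1 = 0" "M$3$2 \<noteq> 0" | "M$3$1 \<noteq> 0"
    by blast
  then show ?thesis
  proof cases
    case 1
    then show ?thesis
      using SL3_eq_upper_phi1[OF assms] mat1_in_Yset by (metis matrix_mul_rid phi1_mat1 phi2_mat1)
  next
    case 2
    then show ?thesis
      using SL3_eq_upper_phi1_phi2[OF assms] mat1_in_Yset by (metis matrix_mul_rid phi1_mat1)
  next
    case 3
    then show ?thesis
      using SL3_eq_upper_phi1_phi2_phi1[OF assms] by blast
  qed
qed

lemma upper_phi1_unique:
  assumes "B \<in> upper_SL3" "B' \<in> upper_SL3" "y \<in> Yset C R" "y' \<in> Yset C R"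
    and eq: "B ** phi1 y = B' ** phi1 y'"
  shows "B = B' \<and> y = y'"
proof -
  have "B$2$2 * y$2$1 = B'$2$2 * y'$2$1" "B$2$2 * y$2$2 = B'$2$2 * y'$2$2"
    using arg_cong[OF eq, of "\<lambda>M. M$2$1"] arg_cong[OF eq, of "\<lambda>M. M$2$2"]
    by (simp_all add: upper_SL3_mult_nth assms(1,2) phi1_nth)
  then have "y = y'"
    using Yset_eq_of_proportional_bottom_rows[OF C R assms(3,4)] upper_SL3_diag_nonzero assms(1,2)
    by blast
  with eq show ?thesis
    by (simp add: phi1_cancel_right[OF Yset_SL2[OF assms(4)]])
qed

lemma upper_phi1_phi2_unique:
  assumes "B \<in> upper_SL3" "B' \<in> upper_SL3" "y2 \<in> Yset C R" "y2' \<in> Yset C R"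
    and eq: "B ** phi1 y3 ** phi2 y2 = B' ** phi1 y3' ** phi2 y2'"
  shows "B ** phi1 y3 = B' ** phi1 y3' \<and> y2 = y2'"
proof -
  have "B$3$3 * y2$2$1 = B'$3$3 * y2'$2$1" "B$3$3 * y2$2$2 = B'$3$3 * y2'$2$2"
    using arg_cong[OF eq, of "\<lambda>M. M$3$2"] arg_cong[OF eq, of "\<lambda>M. M$3$3"]
    by (simp_all add: upper_SL3_mult_nth assms(1,2) matrix_mult_phi2_nth phi1_nth)
  then have "y2 = y2'"
    using Yset_eq_of_proportional_bottom_rows[OF C R assms(3,4)] upper_SL3_diag_nonzero assms(1,2)
    by blast
  with eq show ?thesis
    by (simp add: phi2_cancel_right[OF Yset_SL2[OF assms(4)]])
qed

lemma bruhat_decomposition_unique: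
  assumes B: "B \<in> upper_SL3" "B' \<in> upper_SL3"
    and y: "y3 \<in> Yset C R" "y2 \<in> Yset C R" "y1 \<in> Yset C R" "y2 = mat 1 \<longrightarrow> y1 = mat 1"
    and y': "y3' \<in> Yset C R" "y2' \<in> Yset C R" "y1' \<in> Yset C R" "y2' = mat 1 \<longrightarrow> y1' = mat 1"
    and eq: "B ** phi1 y3 ** phi2 y2 ** phi1 y1 = B' ** phi1 y3' ** phi2 y2' ** phi1 y1'"
  shows "B = B' \<and> y3 = y3' \<and> y2 = y2' \<and> y1 = y1'"
proof -
  have e: "B$3$3 \<noteq> 0" "B'$3$3 \<noteq> 0"
    using upper_SL3_diag_nonzero B by auto
  have row3: "B$3$3 * y2$2$1 * y1$2$1 = B'$3$3 * y2'$2$1 * y1'$2$1"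
      "B$3$3 * y2$2$1 * y1$2$2 = B'$3$3 * y2'$2$1 * y1'$2$2"
    using arg_cong[OF eq, of "\<lambda>M. M$3$1"] arg_cong[OF eq, of "\<lambda>M. M$3$2"] B
    by (simp_all add: upper_SL3_def matrix_mult_phi1_nth matrix_mult_phi2_nth phi1_nth)
  txt \<open>As the bottom row of \<open>y1\<close> is nonzero, \<open>row3\<close> decides whether \<open>y2 = 1\<close>,
    and otherwise determines the bottom row of \<open>y1\<close> up to a scalar.\<close>
  have "y2$2$1 = 0 \<longleftrightarrow> y2'$2$1 = 0"
    using row3 e SL2_bottom_row_nonzero[OF Yset_SL2[OF y(3)]]
      SL2_bottom_row_nonzero[OF Yset_SL2[OF y'(3)]] by auto
  then have y1_eq: "y1 = y1'"
  proof (cases "y2$2$1 = 0")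
    case True
    then show ?thesis
      using \<open>y2$2$1 = 0 \<longleftrightarrow> y2'$2$1 = 0\<close> Yset_eq_mat1_iff[OF C] y y' by auto
  next
    case False
    then show ?thesis
      using Yset_eq_of_proportional_bottom_rows[OF C R y(3) y'(3), of "B$3$3 * y2$2$1" "B'$3$3 * y2'$2$1"]
        row3 e \<open>y2$2$1 = 0 \<longleftrightarrow> y2'$2$1 = 0\<close> by simp
  qed
  with eq have "B ** phi1 y3 ** phi2 y2 = B' ** phi1 y3' ** phi2 y2'"
    by (simp add: phi1_cancel_right[OF Yset_SL2[OF y'(3)]])
  then have "B ** phi1 y3 = B' ** phi1 y3'" "y2 = y2'"
    using upper_phi1_phi2_unique B y(2) y'(2) by blast+
  then show ?thesis
    using upper_phi1_unique B y(1) y'(1) y1_eq by blast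
qed

lemma SL3_covered_by_cells:
  assumes "M \<in> SL3"
  shows "\<exists>i. valid_index C R i \<and> M \<in> cell i"
proof -
  obtain B y3 y2 y1 where B: "B \<in> upper_SL3" "y3 \<in> Yset C R" "y2 \<in> Yset C R" "y1 \<in> Yset C R"
      "y2 = mat 1 \<longrightarrow> y1 = mat 1" "M = B ** phi1 y3 ** phi2 y2 ** phi1 y1"
    using SL3_bruhat_decomposition[OF assms] by blast
  obtain g u d where gud: "g \<in> Gamma_inf3" "u \<in> U3" "d \<in> D3" "B = g ** u ** d"
    using upper_SL3_Gamma_U_D[OF B(1)] by blast
  obtain i where i: "valid_index C R i" "cell_params i = (y3, y2, y1, d, u)"
    using valid_index_with_params B(2-5) gud(2,3) by blast
  have "M \<in> cell i"
    unfolding cell_eq_image[OF i(2)] B(6) gud(4) using gud(1) by blast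
  with i(1) show ?thesis
    by blast
qed

lemma cells_disjoint:
  assumes "valid_index C R i" "valid_index C R j" "M \<in> cell i" "M \<in> cell j"
  shows "i = j"
proof -
  obtain y3 y2 y1 d u where pi: "cell_params i = (y3, y2, y1, d, u)"
    by (metis prod_cases5)
  obtain y3' y2' y1' d' u' where pj: "cell_params j = (y3', y2', y1', d', u')"
    by (metis prod_cases5)
  have y: "y3 \<in> Yset C R" "y2 \<in> Yset C R" "y1 \<in> Yset C R" "y2 = mat 1 \<longrightarrow> y1 = mat 1"
      "d \<in> D3" "u \<in> U3"
    using valid_index_params[OF assms(1) pi] by auto
  have y': "y3' \<in> Yset C R" "y2' \<in> Yset C R" "y1' \<in> Yset C R" "y2' = mat 1 \<longrightarrow> y1' = mat 1"
      "d' \<in> D3" "u' \<in> U3"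
    using valid_index_params[OF assms(2) pj] by auto
  obtain g g' where g: "g \<in> Gamma_inf3" "g' \<in> Gamma_inf3"
    and eq: "g ** u ** d ** phi1 y3 ** phi2 y2 ** phi1 y1 =
      g' ** u' ** d' ** phi1 y3' ** phi2 y2' ** phi1 y1'"
    using assms(3,4) unfolding cell_eq_image[OF pi] cell_eq_image[OF pj] by auto
  have "g ** u ** d \<in> upper_SL3" "g' ** u' ** d' \<in> upper_SL3"
    using Gamma_U_D_in_upper_SL3 g y(5,6) y'(5,6) by simp_all
  from bruhat_decomposition_unique[OF this y(1-4) y'(1-4) eq]
  have "g ** u ** d = g' ** u' ** d'" "y3 = y3'" "y2 = y2'" "y1 = y1'"
    by simp_all
  moreover have "u = u'" "d = d'"
    using Gamma_U_D_unique[OF g(1) y(6,5) g(2) y'(6,5) calculation(1)] by simp_all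
  ultimately have "cell_params i = cell_params j"
    using pi pj by simp
  then show ?thesis
    using cell_params_inj assms(1,2) by blast
qed

end

theorem theorem3p1:
  fixes C :: "complex set" and R :: "complex \<Rightarrow> complex set"
  assumes "nonzero_rep_system C"
    and "\<forall>c \<in> C. residue_rep_system c (R c)"
  shows "(\<Union>i \<in> {i. valid_index C R i}. cell i) = SL3 \<and>
    (\<forall>i j. valid_index C R i \<longrightarrow> valid_index C R j \<longrightarrow> i \<noteq> j \<longrightarrow> cell i \<inter> cell j = {})"
proof (intro conjI allI impI)
  show "(\<Union>i \<in> {i. valid_index C R i}. cell i) = SL3"
    using cell_subset_SL3 SL3_covered_by_cells[OF assms] by blast
next
  fix i j
  assume "valid_index C R i" "valid_index C R j" "i \<noteq> j"
  then show "cell i \<inter> cell j = {}"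
    using cells_disjoint[OF assms] by blast
qed

end
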